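(* Let $n\geq 2$ be an integer and let $\mathcal{G}\in\mathbb{EFL}_{n}$ be such that every shared vertex of $\mathcal{G}$ belongs to exactly two defining $n$-cliques of $\mathcal{G}$. Denote the shared vertex common to $Q_i$ and $Q_j$ ($1\le i<j\le n$) by $(i,j)$. (i) If $n$ is even, then the map $c$ on the shared vertices defined by $c\big((i,j)\big)\equiv i+j \pmod{n-1}$ if $j<n$, and $c\big((i,j)\big)\equiv 2i \pmod{n-1}$ if $j=n$, with values in $\{1,\ldots,n-1\}$, is a proper $(n-1)$-colouring of the shared vertices of $\mathcal{G}$ (i.e. any two adjacent shared vertices receive different colours). (ii) If $n$ is odd, then $c\big((i,j)\big)\equiv i+j\pmod{n}$, with values in $\{1,\ldots,n\}$, is a proper $n$-colouring of the shared vertices of $\mathcal{G}$. (iii) $\chi(\mathcal{G})=n$.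
   Context: For a positive integer $n$, $\mathbb{EFL}_{n}$ denotes the class of (simple) graphs $G$ that are the union of $n$ cliques $Q_1,\ldots,Q_n$, each of order $n$ (the defining $n$-cliques), such that any two of them intersect in at most one vertex; i.e. $V(G)=\bigcup V(Q_i)$ and $E(G)=\bigcup E(Q_i)$. A vertex belonging to more than one defining $n$-clique is called shared. If $Q_i$ and $Q_j$ ($i<j$) have a common vertex, it is denoted by the ordered pair $(i,j)$. When reducing modulo $t$, the complete residue system used is $\{1,\ldots,t\}$. $\chi$ denotes the chromatic number. *)

theory Defs
  imports Main
begin

text \<open>A graph in EFL_n is given by its n defining n-cliques Q 1, ..., Q n
  (indexed by 1..n); vertices are their union, edges are pairs of distinct
  vertices lying in a common defining clique.\<close>

definition efl :: "nat \<Rightarrow> (nat \<Rightarrow> 'a set) \<Rightarrow> bool" where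
  "efl n Q \<longleftrightarrow> (\<forall>i\<in>{1..n}. finite (Q i) \<and> card (Q i) = n) \<and>
     (\<forall>i\<in>{1..n}. \<forall>j\<in>{1..n}. i \<noteq> j \<longrightarrow> card (Q i \<inter> Q j) \<le> 1)"

definition efl_verts :: "nat \<Rightarrow> (nat \<Rightarrow> 'a set) \<Rightarrow> 'a set" where
  "efl_verts n Q = (\<Union>i\<in>{1..n}. Q i)"

definition efl_adj :: "nat \<Rightarrow> (nat \<Rightarrow> 'a set) \<Rightarrow> 'a \<Rightarrow> 'a \<Rightarrow> bool" where
  "efl_adj n Q u v \<longleftrightarrow> u \<noteq> v \<and> (\<exists>i\<in>{1..n}. u \<in> Q i \<and> v \<in> Q i)"

definition cliques_of :: "nat \<Rightarrow> (nat \<Rightarrow> 'a set) \<Rightarrow> 'a \<Rightarrow> nat set" where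
  "cliques_of n Q v = {i\<in>{1..n}. v \<in> Q i}"

definition shared :: "nat \<Rightarrow> (nat \<Rightarrow> 'a set) \<Rightarrow> 'a \<Rightarrow> bool" where
  "shared n Q v \<longleftrightarrow> card (cliques_of n Q v) \<ge> 2"

text \<open>For a shared vertex lying in exactly two cliques, its pair (i,j), i<j.\<close>
definition pair_i :: "nat \<Rightarrow> (nat \<Rightarrow> 'a set) \<Rightarrow> 'a \<Rightarrow> nat" where
  "pair_i n Q v = Min (cliques_of n Q v)"
definition pair_j :: "nat \<Rightarrow> (nat \<Rightarrow> 'a set) \<Rightarrow> 'a \<Rightarrow> nat" where
  "pair_j n Q v = Max (cliques_of n Q v)"

definition resid :: "nat \<Rightarrow> nat \<Rightarrow> nat" where
  "resid t x = (if x mod t = 0 then t else x mod t)"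

definition col_even :: "nat \<Rightarrow> (nat \<Rightarrow> 'a set) \<Rightarrow> 'a \<Rightarrow> nat" where
  "col_even n Q v = (if pair_j n Q v < n then resid (n - 1) (pair_i n Q v + pair_j n Q v)
                     else resid (n - 1) (2 * pair_i n Q v))"

definition col_odd :: "nat \<Rightarrow> (nat \<Rightarrow> 'a set) \<Rightarrow> 'a \<Rightarrow> nat" where
  "col_odd n Q v = resid n (pair_i n Q v + pair_j n Q v)"

definition proper_colouring :: "'a set \<Rightarrow> ('a \<Rightarrow> 'a \<Rightarrow> bool) \<Rightarrow> nat \<Rightarrow> ('a \<Rightarrow> nat) \<Rightarrow> bool" where
  "proper_colouring V adj k f \<longleftrightarrow> (\<forall>v\<in>V. f v < k) \<and>
     (\<forall>u\<in>V. \<forall>v\<in>V. adj u v \<longrightarrow> f u \<noteq> f v)"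

definition chromatic_number :: "'a set \<Rightarrow> ('a \<Rightarrow> 'a \<Rightarrow> bool) \<Rightarrow> nat" where
  "chromatic_number V adj = (LEAST k. \<exists>f. proper_colouring V adj k f)"

end

theory Submission
  imports Defs "HOL-Number_Theory.Cong"
begin

(* A shared vertex lying in exactly the cliques Q i and Q j behaves like the edge {i, j} of
   the complete graph K_n: two distinct vertices of Q k lie in no second common clique, so
   adjacent shared vertices correspond to distinct edges of K_n at a common endpoint k.
   Both colourings are therefore proper edge colourings of K_n: i + j mod n for every n,
   and for even n the round-robin colouring with n - 1 colours, which gives the edge {k, n}
   the colour 2k that is missing at k among the edges of K_(n-1).  The chromatic number is
   at least n because of the clique Q 1, and at most n because each non-shared vertex lies
   in a single clique, so a colouring of the shared vertices extends clique by clique. *)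

lemma resid_in_range: "t > 0 \<Longrightarrow> resid t x \<in> {1..t}"
  unfolding resid_def by auto

lemma resid_eq_iff_cong: "t > 0 \<Longrightarrow> resid t x = resid t y \<longleftrightarrow> [x = y] (mod t)"
  unfolding resid_def cong_def by (metis mod_less_divisor less_irrefl)

lemma resid_of_range: "x \<in> {1..t} \<Longrightarrow> resid t x = x"
  unfolding resid_def by (cases "x = t") auto

lemma resid_cong_imp_eq:
  fixes a b t :: nat
  assumes "a \<in> {1..t}" "b \<in> {1..t}" "[a = b] (mod t)"
  shows "a = b"
proof -
  have "t > 0" using assms(1) by auto
  then show ?thesis
    using assms resid_eq_iff_cong resid_of_range by metis
qed

lemma resid_add_left_inj:
  assumes "a \<in> {1..t}" "b \<in> {1..t}" "resid t (k + a) = resid t (k + b)"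
  shows "a = b"
proof -
  have "t > 0" using assms(1) by auto
  with assms(3) have "[a = b] (mod t)"
    by (simp add: resid_eq_iff_cong cong_add_lcancel_nat)
  with assms(1,2) show ?thesis by (rule resid_cong_imp_eq)
qed

lemma resid_double_inj:
  assumes "odd t" "a \<in> {1..t}" "b \<in> {1..t}" "resid t (2 * a) = resid t (2 * b)"
  shows "a = b"
proof -
  have "t > 0" "coprime 2 t" using assms(1) by (auto intro: odd_pos)
  with assms(4) have "[a = b] (mod t)"
    by (simp add: resid_eq_iff_cong cong_mult_lcancel_nat)
  with assms(2,3) show ?thesis by (rule resid_cong_imp_eq)
qed

definition round_robin :: "nat \<Rightarrow> nat \<Rightarrow> nat \<Rightarrow> nat" where
  "round_robin n i j =
     (if j = n then resid (n - 1) (2 * i)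
      else if i = n then resid (n - 1) (2 * j)
      else resid (n - 1) (i + j))"

lemma round_robin_left_inj:
  assumes "even n" "n \<ge> 2" and "k \<in> {1..n}" "a \<in> {1..n}" "b \<in> {1..n}" "a \<noteq> k" "b \<noteq> k"
    and "round_robin n k a = round_robin n k b"
  shows "a = b"
proof (cases "k = n")
  case True
  then have "a \<in> {1..n - 1}" "b \<in> {1..n - 1}" "resid (n - 1) (2 * a) = resid (n - 1) (2 * b)"
    using assms(4-8) by (auto simp: round_robin_def)
  moreover have "odd (n - 1)" using assms(1,2) by simp
  ultimately show ?thesis using resid_double_inj by blast
next
  case False
  \<comment> \<open>the edge {k, n} takes the place of the missing loop {k, k}\<close>
  define loop where "loop x = (if x = n then k else x)" for x
  have rr: "round_robin n k x = resid (n - 1) (k + loop x)" for x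
    using False by (simp add: round_robin_def loop_def mult_2)
  have "loop a \<in> {1..n - 1}" "loop b \<in> {1..n - 1}"
    using False assms(3-5) by (auto simp: loop_def)
  then have "loop a = loop b"
    using resid_add_left_inj assms(8) rr by metis
  then show ?thesis using assms(6,7) by (auto simp: loop_def split: if_splits)
qed

lemma cliques_of_subset: "cliques_of n Q v \<subseteq> {1..n}"
  unfolding cliques_of_def by auto

lemma pair_sum_eq: "cliques_of n Q v = {i, j} \<Longrightarrow> pair_i n Q v + pair_j n Q v = i + j"
  by (simp add: pair_i_def pair_j_def min_def max_def)

lemma col_odd_eq: "cliques_of n Q v = {i, j} \<Longrightarrow> col_odd n Q v = resid n (i + j)"
  by (simp add: col_odd_def pair_sum_eq)

lemma col_even_eq:
  assumes "cliques_of n Q v = {i, j}" "i \<noteq> j"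
  shows "col_even n Q v = round_robin n i j"
proof -
  have ij: "i \<le> n" "j \<le> n" using assms(1) cliques_of_subset by fastforce+
  have "pair_i n Q v = min i j" "pair_j n Q v = max i j"
    using assms(1) by (simp_all add: pair_i_def pair_j_def)
  then show ?thesis
    using ij assms(2) by (auto simp: col_even_def round_robin_def min_def max_def add.commute)
qed

lemma col_odd_in_range: "n > 0 \<Longrightarrow> col_odd n Q v \<in> {1..n}"
  unfolding col_odd_def by (rule resid_in_range)

lemma col_even_in_range: "n \<ge> 2 \<Longrightarrow> col_even n Q v \<in> {1..n - 1}"
  unfolding col_even_def using resid_in_range[of "n - 1"] by simp

lemma cliques_of_card_2_obtain:
  assumes "card (cliques_of n Q v) = 2" "k \<in> cliques_of n Q v"
  obtains a where "a \<in> {1..n}" "a \<noteq> k" "cliques_of n Q v = {k, a}"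
proof -
  obtain x y where xy: "x \<noteq> y" "cliques_of n Q v = {x, y}"
    using assms(1) by (auto simp: card_2_iff)
  obtain a where a: "a \<noteq> k" "cliques_of n Q v = {k, a}"
  proof (cases "k = x")
    case True
    with xy show ?thesis by (intro that[of y]) auto
  next
    case False
    with xy assms(2) have "k = y" by simp
    with xy show ?thesis by (intro that[of x]) auto
  qed
  moreover have "a \<in> {1..n}" using a(2) cliques_of_subset[of n Q v] by auto
  ultimately show ?thesis using that by blast
qed

lemma cliques_of_not_shared:
  assumes "\<not> shared n Q v" "k \<in> {1..n}" "v \<in> Q k"
  shows "cliques_of n Q v = {k}"
proof -
  have k: "k \<in> cliques_of n Q v" using assms(2,3) by (simp add: cliques_of_def)
  have "card (cliques_of n Q v) \<le> 1" using assms(1) by (simp add: shared_def)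
  moreover have "finite (cliques_of n Q v)" by (simp add: cliques_of_def)
  ultimately show ?thesis using k by (auto simp: card_le_Suc0_iff_eq)
qed

lemma efl_inter_unique:
  assumes "efl n Q" "i \<in> {1..n}" "j \<in> {1..n}" "i \<noteq> j"
    and "u \<in> Q i \<inter> Q j" "v \<in> Q i \<inter> Q j"
  shows "u = v"
proof -
  have "finite (Q i \<inter> Q j)" "card (Q i \<inter> Q j) \<le> 1"
    using assms(1-4) by (auto simp: efl_def)
  then show ?thesis using assms(5,6) by (auto simp: card_le_Suc0_iff_eq)
qed

lemma efl_adj_shared_cliques:
  assumes "efl n Q" "efl_adj n Q u v"
    and "card (cliques_of n Q u) = 2" "card (cliques_of n Q v) = 2"
  obtains k a b where "k \<in> {1..n}" "a \<in> {1..n}" "b \<in> {1..n}" "a \<noteq> k" "b \<noteq> k" "a \<noteq> b"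
    "cliques_of n Q u = {k, a}" "cliques_of n Q v = {k, b}"
proof -
  obtain k where k: "k \<in> {1..n}" "u \<in> Q k" "v \<in> Q k" and "u \<noteq> v"
    using assms(2) by (auto simp: efl_adj_def)
  then have "k \<in> cliques_of n Q u" "k \<in> cliques_of n Q v"
    by (auto simp: cliques_of_def)
  then obtain a b where a: "a \<in> {1..n}" "a \<noteq> k" "cliques_of n Q u = {k, a}"
    and b: "b \<in> {1..n}" "b \<noteq> k" "cliques_of n Q v = {k, b}"
    using assms(3,4) cliques_of_card_2_obtain by metis
  have "a \<noteq> b"
  proof
    assume "a = b"
    then have "u \<in> Q k \<inter> Q a" "v \<in> Q k \<inter> Q a"
      using a b k by (auto simp: cliques_of_def)
    then show False using efl_inter_unique assms(1) k(1) a(1,2) \<open>u \<noteq> v\<close> by metis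
  qed
  with that k(1) a b show ?thesis by blast
qed

lemma col_odd_proper:
  assumes "efl n Q" "efl_adj n Q u v"
    and "card (cliques_of n Q u) = 2" "card (cliques_of n Q v) = 2"
  shows "col_odd n Q u \<noteq> col_odd n Q v"
proof -
  obtain k a b where "k \<in> {1..n}" and ab: "a \<in> {1..n}" "b \<in> {1..n}"
    and "a \<noteq> k" "b \<noteq> k" "a \<noteq> b" "cliques_of n Q u = {k, a}" "cliques_of n Q v = {k, b}"
    by (rule efl_adj_shared_cliques[OF assms])
  then have "col_odd n Q u = resid n (k + a)" "col_odd n Q v = resid n (k + b)"
    by (simp_all add: col_odd_eq)
  with \<open>a \<noteq> b\<close> show ?thesis using resid_add_left_inj[OF ab] by auto
qed

lemma col_even_proper:
  assumes "even n" "n \<ge> 2" "efl n Q" "efl_adj n Q u v"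
    and "card (cliques_of n Q u) = 2" "card (cliques_of n Q v) = 2"
  shows "col_even n Q u \<noteq> col_even n Q v"
proof -
  obtain k a b where kab: "k \<in> {1..n}" "a \<in> {1..n}" "b \<in> {1..n}" "a \<noteq> k" "b \<noteq> k" "a \<noteq> b"
    and "cliques_of n Q u = {k, a}" "cliques_of n Q v = {k, b}"
    by (rule efl_adj_shared_cliques[OF assms(3-6)])
  then have "col_even n Q u = round_robin n k a" "col_even n Q v = round_robin n k b"
    by (simp_all add: col_even_eq)
  with kab show ?thesis using round_robin_left_inj[OF assms(1,2) kab(1-5)] by auto
qed

lemma inj_on_extend:
  assumes "finite K" "finite B" "card K \<le> card B" "S \<subseteq> K" "inj_on c S" "c ` S \<subseteq> B"
  obtains g where "inj_on g K" "g ` K \<subseteq> B" "\<forall>v\<in>S. g v = c v"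
proof -
  have fin: "finite S" "finite (c ` S)" using assms(1,4) finite_subset by auto
  have "card (K - S) = card K - card S" using card_Diff_subset[OF fin(1) assms(4)] .
  also have "\<dots> \<le> card B - card (c ` S)" using assms(3) card_image[OF assms(5)] by simp
  also have "\<dots> = card (B - c ` S)" using card_Diff_subset[OF fin(2) assms(6)] by simp
  finally obtain h where h: "h ` (K - S) \<subseteq> B - c ` S" "inj_on h (K - S)"
    using card_le_inj[of "K - S" "B - c ` S"] assms(1,2) by blast
  define g where "g v = (if v \<in> S then c v else h v)" for v
  have "inj_on g K"
  proof (rule inj_onI)
    fix x y assume "x \<in> K" "y \<in> K" "g x = g y"
    with h show "x = y"
      by (cases "x \<in> S"; cases "y \<in> S") (force simp: g_def dest: inj_onD[OF assms(5)] inj_onD[OF h(2)])+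
  qed
  moreover have "g ` K \<subseteq> B" using h assms(6) by (auto simp: g_def)
  moreover have "\<forall>v\<in>S. g v = c v" by (simp add: g_def)
  ultimately show ?thesis by (rule that)
qed

lemma proper_colouring_clique_card_le:
  assumes "proper_colouring V adj m f" "finite K" "K \<subseteq> V"
    and "\<And>u v. u \<in> K \<Longrightarrow> v \<in> K \<Longrightarrow> u \<noteq> v \<Longrightarrow> adj u v"
  shows "card K \<le> m"
proof -
  have "inj_on f K"
    using assms(1,3,4) unfolding proper_colouring_def inj_on_def by blast
  moreover have "f ` K \<subseteq> {..<m}"
    using assms(1,3) unfolding proper_colouring_def by blast
  ultimately show ?thesis using card_inj_on_le[of f K "{..<m}"] by simp
qed

lemma chromatic_number_eqI:
  assumes "proper_colouring V adj k f"
    and "\<And>m g. proper_colouring V adj m g \<Longrightarrow> k \<le> m"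
  shows "chromatic_number V adj = k"
  unfolding chromatic_number_def
  by (rule Least_equality) (use assms in blast)+

lemma efl_shared_colouring_extends:
  assumes "efl n Q"
    and range: "\<forall>v\<in>efl_verts n Q. shared n Q v \<longrightarrow> c v < n"
    and proper: "\<forall>u\<in>efl_verts n Q. \<forall>v\<in>efl_verts n Q.
                   shared n Q u \<and> shared n Q v \<and> efl_adj n Q u v \<longrightarrow> c u \<noteq> c v"
  obtains f where "proper_colouring (efl_verts n Q) (efl_adj n Q) n f"
proof -
  have "\<exists>g. inj_on g (Q k) \<and> g ` Q k \<subseteq> {..<n} \<and> (\<forall>v\<in>Q k. shared n Q v \<longrightarrow> g v = c v)"
    if k: "k \<in> {1..n}" for k
  proof -
    have Qk: "finite (Q k)" "card (Q k) = n" "Q k \<subseteq> efl_verts n Q"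
      using assms(1) k by (auto simp: efl_def efl_verts_def)
    have "inj_on c {v \<in> Q k. shared n Q v}"
      using proper Qk(3) k unfolding inj_on_def efl_adj_def by blast
    moreover have "c ` {v \<in> Q k. shared n Q v} \<subseteq> {..<n}" using range Qk(3) by auto
    ultimately obtain g where "inj_on g (Q k)" "g ` Q k \<subseteq> {..<n}"
      "\<forall>v\<in>{v \<in> Q k. shared n Q v}. g v = c v"
      using inj_on_extend[of "Q k" "{..<n}" "{v \<in> Q k. shared n Q v}" c] Qk(1,2) by auto
    then show ?thesis by auto
  qed
  then obtain g where g: "\<And>k. k \<in> {1..n} \<Longrightarrow> inj_on (g k) (Q k) \<and> g k ` Q k \<subseteq> {..<n} \<and>
      (\<forall>v\<in>Q k. shared n Q v \<longrightarrow> g k v = c v)"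
    by metis
  \<comment> \<open>a non-shared vertex lies only in the clique with index pair_i\<close>
  define f where "f v = (if shared n Q v then c v else g (pair_i n Q v) v)" for v
  have f_g: "f v = g k v" if k: "k \<in> {1..n}" "v \<in> Q k" for k v
  proof (cases "shared n Q v")
    case True
    then show ?thesis using g[OF k(1)] k(2) by (simp add: f_def)
  next
    case False
    then have "pair_i n Q v = k" using cliques_of_not_shared[OF False k] by (simp add: pair_i_def)
    with False show ?thesis by (simp add: f_def)
  qed
  have "proper_colouring (efl_verts n Q) (efl_adj n Q) n f"
    unfolding proper_colouring_def
  proof (intro conjI ballI impI)
    fix v assume "v \<in> efl_verts n Q"
    then obtain k where "k \<in> {1..n}" "v \<in> Q k" by (auto simp: efl_verts_def)
    then show "f v < n" using g f_g by blast
  next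
    fix u v assume "efl_adj n Q u v"
    then obtain k where "k \<in> {1..n}" "u \<in> Q k" "v \<in> Q k" "u \<noteq> v"
      by (auto simp: efl_adj_def)
    then show "f u \<noteq> f v" using g f_g unfolding inj_on_def by metis
  qed
  then show ?thesis by (rule that)
qed

lemma efl_chromatic_number:
  assumes "n \<ge> 1" "efl n Q"
    and two: "\<forall>v\<in>efl_verts n Q. shared n Q v \<longrightarrow> card (cliques_of n Q v) = 2"
  shows "chromatic_number (efl_verts n Q) (efl_adj n Q) = n"
proof -
  have "col_odd n Q v - 1 < n" for v
    using col_odd_in_range[of n Q v] assms(1) by auto
  moreover have "col_odd n Q u - 1 \<noteq> col_odd n Q v - 1"
    if "efl_adj n Q u v" "card (cliques_of n Q u) = 2" "card (cliques_of n Q v) = 2" for u v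
    using col_odd_proper[OF assms(2) that] col_odd_in_range[of n Q u] col_odd_in_range[of n Q v]
      assms(1) by auto
  ultimately obtain f where f: "proper_colouring (efl_verts n Q) (efl_adj n Q) n f"
    using efl_shared_colouring_extends[OF assms(2), of "\<lambda>v. col_odd n Q v - 1"] two by blast
  have Q1: "finite (Q 1)" "card (Q 1) = n" "Q 1 \<subseteq> efl_verts n Q"
    using assms(1,2) by (auto simp: efl_def efl_verts_def)
  have "efl_adj n Q u v" if "u \<in> Q 1" "v \<in> Q 1" "u \<noteq> v" for u v
    unfolding efl_adj_def using that assms(1) by (intro conjI bexI[of _ 1]) auto
  then have "n \<le> m" if "proper_colouring (efl_verts n Q) (efl_adj n Q) m g" for m g
    using proper_colouring_clique_card_le[OF that Q1(1,3)] Q1(2) by simp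
  with f show ?thesis by (rule chromatic_number_eqI)
qed

theorem theorem2p4:
  fixes n :: nat and Q :: "nat \<Rightarrow> 'a set"
  assumes "n \<ge> 2"
    and "efl n Q"
    and two: "\<forall>v\<in>efl_verts n Q. shared n Q v \<longrightarrow> card (cliques_of n Q v) = 2"
  shows "(even n \<longrightarrow>
            (\<forall>v\<in>efl_verts n Q. shared n Q v \<longrightarrow> col_even n Q v \<in> {1..n-1}) \<and>
            (\<forall>u\<in>efl_verts n Q. \<forall>v\<in>efl_verts n Q. shared n Q u \<and> shared n Q v \<and>
               efl_adj n Q u v \<longrightarrow> col_even n Q u \<noteq> col_even n Q v))
       \<and> (odd n \<longrightarrow>
            (\<forall>v\<in>efl_verts n Q. shared n Q v \<longrightarrow> col_odd n Q v \<in> {1..n}) \<and>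
            (\<forall>u\<in>efl_verts n Q. \<forall>v\<in>efl_verts n Q. shared n Q u \<and> shared n Q v \<and>
               efl_adj n Q u v \<longrightarrow> col_odd n Q u \<noteq> col_odd n Q v))
       \<and> chromatic_number (efl_verts n Q) (efl_adj n Q) = n"
proof -
  have n: "0 < n" "1 \<le> n" using assms(1) by simp_all
  have two_cliques: "card (cliques_of n Q v) = 2" if "v \<in> efl_verts n Q" "shared n Q v" for v
    using two that by blast
  show ?thesis
    using col_even_in_range[OF assms(1), of Q] col_even_proper[OF _ assms(1,2) _ two_cliques two_cliques]
      col_odd_in_range[OF n(1), of Q] col_odd_proper[OF assms(2) _ two_cliques two_cliques]
      efl_chromatic_number[OF n(2) assms(2) two]
    by blast
qed

end
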